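(* Let $a\in\mathbb{C}$ and $b=0$, and suppose $\cdot_\lambda\cdot$ is a compatible left-symmetric conformal algebraic structure on $\mathcal{W}(a,0)=\mathbb{C}[\partial]L\oplus\mathbb{C}[\partial]W$ such that $\mathbb{C}[\partial]L$ is a left-symmetric conformal subalgebra. Let $c\in\mathbb{C}$ with $L_\lambda L=(\partial+\lambda+c)L$, and write $L_\lambda W=g_1L+g_2W$, $W_\lambda L=h_1L+h_2W$, $W_\lambda W=k_1L+k_2W$ with $g_i,h_i,k_i\in\mathbb{C}[\lambda,\partial]$. Assume $g_2(\lambda,\partial)=\partial+(a-1)\lambda+c$ and $h_2(\lambda,\partial)=\partial+\lambda+c$. Then one of the following holds: (C2) $h_1=g_1=k_1=k_2=0$; (C3) $a=1$ (so $g_2=\partial+c$), $h_1=g_1=k_1=0$, and $k_2$ is a nonzero constant.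
   Context: A conformal algebra is a $\mathbb{C}[\partial]$-module $R$ with a $\mathbb{C}$-bilinear map $R\times R\to R[\lambda]$, $(x,y)\mapsto x_\lambda y$, satisfying $(\partial x)_\lambda y=-\lambda\, x_\lambda y$ and $x_\lambda(\partial y)=(\partial+\lambda)\,x_\lambda y$. For $x,y\in R$, $y_{-\lambda-\partial}x$ means: write $y_\mu x=\sum_j \mu^j z_j$ and set $y_{-\lambda-\partial}x=\sum_j(-\lambda-\partial)^j z_j$. A left-symmetric conformal algebra is a conformal algebra with $(x_\lambda y)_{\lambda+\mu}z-x_\lambda(y_\mu z)=(y_\mu x)_{\lambda+\mu}z-y_\mu(x_\lambda z)$. A compatible left-symmetric conformal algebraic structure on a Lie conformal algebra $(R,[\cdot_\lambda\cdot])$ is a left-symmetric conformal product on the same $\mathbb{C}[\partial]$-module with $x_\lambda y-y_{-\lambda-\partial}x=[x_\lambda y]$ for all $x,y$. $\mathcal{W}(a,b)$ is the free $\mathbb{C}[\partial]$-module with basis $L,W$ and Lie conformal brackets $[L_\lambda L]=(\partial+2\lambda)L$, $[L_\lambda W]=(\partial+a\lambda+b)W$, $[W_\lambda W]=0$. "$\mathbb{C}[\partial]L$ is a left-symmetric conformal subalgebra" means $L_\lambda L\in(\mathbb{C}[\partial]L)[\lambda]$; in that case $L_\lambda L=(\partial+\lambda+c)L$ for some $c\in\mathbb{C}$. *)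

theory Defs
  imports "HOL-Computational_Algebra.Polynomial" "HOL-Library.Product_Plus"
begin

text \<open>The free C[d]-module R = C[d]L + C[d]W is represented by pairs (p, q) of
  complex polynomials in d, standing for p(d) L + q(d) W.
  R[lambda] is represented by pairs of bivariate polynomials
  (complex poly poly: outer variable lambda, inner variable d = the action of
  partial), standing for P(lambda,d) L + Q(lambda,d) W.\<close>

type_synonym R = "complex poly \<times> complex poly"
type_synonym RL = "complex poly poly \<times> complex poly poly"

definition L0 :: R where "L0 = (1, 0)"
definition W0 :: R where "W0 = (0, 1)"

definition Dp :: "complex poly" where "Dp = [:0, 1:]"

definition D :: "R \<Rightarrow> R" where "D x = (Dp * fst x, Dp * snd x)"
definition DRL :: "RL \<Rightarrow> RL" where "DRL P = ([:Dp:] * fst P, [:Dp:] * snd P)"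

definition lamRL :: "RL \<Rightarrow> RL" where "lamRL P = ([:0, 1:] * fst P, [:0, 1:] * snd P)"

definition rsc :: "complex \<Rightarrow> R \<Rightarrow> R" where "rsc c x = (smult c (fst x), smult c (snd x))"
definition rlsc :: "complex \<Rightarrow> RL \<Rightarrow> RL" where "rlsc c P = (smult [:c:] (fst P), smult [:c:] (snd P))"

definition rlsm :: "complex poly poly \<Rightarrow> RL \<Rightarrow> RL" where "rlsm s P = (s * fst P, s * snd P)"

definition evalL :: "RL \<Rightarrow> complex \<Rightarrow> R" where
  "evalL P l = (poly (fst P) [:l:], poly (snd P) [:l:])"

text \<open>the substitution lambda := -lambda-d : from y_mu x to y_{-lambda-d} x\<close>
definition skew :: "RL \<Rightarrow> RL" where
  "skew P = (pcompose (fst P) [:- Dp, -1:], pcompose (snd P) [:- Dp, -1:])"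

definition lift_neg :: "complex poly \<Rightarrow> complex poly poly" where
  "lift_neg p = pcompose (map_poly (\<lambda>c. [:c:]) p) [:0, -1:]"
definition lift_shift :: "complex poly \<Rightarrow> complex poly poly" where
  "lift_shift q = pcompose (map_poly (\<lambda>c. [:c:]) q) [:Dp, 1:]"

text \<open>Lie conformal brackets of W(a,0) on the basis (b = 0); [W_lambda L] is
  obtained from [L_lambda W] by skew-symmetry: -(d + a(-lambda-d)) = (a-1)d + a lambda\<close>
definition brLL :: RL where "brLL = ([:Dp, 2:], 0)"
definition brLW :: "complex \<Rightarrow> RL" where "brLW a = (0, [:Dp, [:a:]:])"
definition brWL :: "complex \<Rightarrow> RL" where "brWL a = (0, [:smult (a - 1) Dp, [:a:]:])"

text \<open>The Lie conformal bracket of W(a,0), extended sesquilinearly: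
  [(p(d)A)_lambda (q(d)B)] = p(-lambda) q(d+lambda) [A_lambda B].\<close>
definition bracketW :: "complex \<Rightarrow> R \<Rightarrow> R \<Rightarrow> RL" where
  "bracketW a x y =
     rlsm (lift_neg (fst x) * lift_shift (fst y)) brLL
   + rlsm (lift_neg (fst x) * lift_shift (snd y)) (brLW a)
   + rlsm (lift_neg (snd x) * lift_shift (fst y)) (brWL a)"

definition conformal_product :: "(R \<Rightarrow> R \<Rightarrow> RL) \<Rightarrow> bool" where
  "conformal_product mul \<longleftrightarrow>
     (\<forall>x y z. mul (x + y) z = mul x z + mul y z) \<and>
     (\<forall>x y z. mul x (y + z) = mul x y + mul x z) \<and>
     (\<forall>c x y. mul (rsc c x) y = rlsc c (mul x y)) \<and>
     (\<forall>c x y. mul x (rsc c y) = rlsc c (mul x y)) \<and>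
     (\<forall>x y. mul (D x) y = - lamRL (mul x y)) \<and>
     (\<forall>x y. mul x (D y) = DRL (mul x y) + lamRL (mul x y))"

text \<open>left-symmetry identity, as an identity of polynomials in lambda, mu
  (with coefficients in R), checked at all complex values l, m\<close>
definition left_symmetric :: "(R \<Rightarrow> R \<Rightarrow> RL) \<Rightarrow> bool" where
  "left_symmetric mul \<longleftrightarrow>
     (\<forall>x y z l m.
        evalL (mul (evalL (mul x y) l) z) (l + m) - evalL (mul x (evalL (mul y z) m)) l
      = evalL (mul (evalL (mul y x) m) z) (l + m) - evalL (mul y (evalL (mul x z) l)) m)"

definition compatible_LSCA_W :: "complex \<Rightarrow> (R \<Rightarrow> R \<Rightarrow> RL) \<Rightarrow> bool" where
  "compatible_LSCA_W a mul \<longleftrightarrow>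
     conformal_product mul \<and> left_symmetric mul \<and>
     (\<forall>x y. mul x y - skew (mul y x) = bracketW a x y)"

end

theory Submission
  imports Defs
begin

text \<open>All structure polynomials are evaluated at points \<open>(\<lambda>, \<partial>) = (l, t)\<close> of \<open>\<complex>\<^sup>2\<close>, so the
  axioms become identities between complex numbers; an identity that holds off a single line
  or point extends everywhere because \<open>\<complex>\<close> is infinite.

  Skew-symmetry gives \<open>g\<^sub>1(\<lambda>,\<partial>) = h\<^sub>1(-\<lambda>-\<partial>,\<partial>)\<close> and \<open>k\<^sub>i(\<lambda>,\<partial>) = k\<^sub>i(-\<lambda>-\<partial>,\<partial>)\<close>. In the
  left-symmetry identity for \<open>(L, W, W)\<close> put \<open>\<mu> = -\<partial>-c\<close>: the \<open>g\<^sub>1\<close>-term drops out and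
  what remains says that \<open>k\<^sub>2(\<nu>, \<cdot>)\<close> is periodic with period \<open>c - \<nu>\<close>, hence constant; by the
  symmetry \<open>k\<^sub>2\<close> is a constant \<open>K\<close>, and \<open>K = 0\<close> unless \<open>a = 1\<close>. The same identity at \<open>\<mu> = 0\<close>
  now gives \<open>(\<partial> + c) g\<^sub>1 = 0\<close>, so \<open>g\<^sub>1 = h\<^sub>1 = 0\<close>, and the identities for \<open>(W, W, L)\<close> and
  \<open>(W, W, W)\<close> then show that \<open>k\<^sub>1\<close> does not depend on \<open>\<lambda>\<close> and that \<open>(\<partial> + c) k\<^sub>1 = 0\<close>.\<close>

definition poly2 :: "'a::comm_semiring_0 poly poly \<Rightarrow> 'a \<Rightarrow> 'a \<Rightarrow> 'a" where
  "poly2 P x y = poly (poly P [:x:]) y"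

lemma poly2_0 [simp]: "poly2 0 x y = 0"
  and poly2_add [simp]: "poly2 (P + Q) x y = poly2 P x y + poly2 Q x y"
  and poly2_mult [simp]: "poly2 (P * Q) x y = poly2 P x y * poly2 Q x y"
  by (simp_all add: poly2_def)

lemma poly2_diff [simp]: "poly2 (P - Q) x y = poly2 P x y - poly2 Q x y"
  for P Q :: "'a::comm_ring poly poly"
  by (simp add: poly2_def)

lemma poly_poly_eq_poly2: "poly (poly P q) y = poly2 P (poly q y) y"
  by (induct P) (auto simp: poly2_def)

lemma poly2_eq_poly_map_poly: "poly2 P x y = poly (map_poly (\<lambda>c. poly c y) P) x"
  by (induct P) (auto simp: poly2_def map_poly_pCons)

lemma poly_eq_if_infinite_coincidence:
  fixes p q :: "'a::idom poly"
  assumes "infinite {x. poly p x = poly q x}"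
  shows "p = q"
proof (rule ccontr)
  assume "p \<noteq> q"
  then have "finite {x. poly (p - q) x = 0}"
    by (intro poly_roots_finite) simp
  with assms show False
    by simp
qed

lemma poly_cancel_linear_factor:
  fixes p q :: "'a::{idom,ring_char_0} poly"
  assumes "\<And>x. (x - z) * poly p x = (x - z) * poly q x"
  shows "p = q"
proof -
  have "[:-z, 1:] * p = [:-z, 1:] * q"
    by (rule poly_ext) (use assms in \<open>simp add: algebra_simps\<close>)
  moreover have "[:-z, 1:] \<noteq> 0"
    by simp
  ultimately show ?thesis
    using mult_left_cancel by blast
qed

lemma poly2_cancel_linear_factor_snd:
  fixes P Q :: "'a::{idom,ring_char_0} poly poly"
  assumes "\<And>y. (y - z) * poly2 P x y = (y - z) * poly2 Q x' y"
  shows "poly2 P x y = poly2 Q x' y"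
  using poly_cancel_linear_factor[of z "poly P [:x:]" "poly Q [:x':]"] assms
  by (simp add: poly2_def)

lemma poly2_cancel_linear_factor_fst:
  fixes P Q :: "'a::{idom,ring_char_0} poly poly"
  assumes "\<And>x. (x - z) * poly2 P x y = (x - z) * poly2 Q x y'"
  shows "poly2 P x y = poly2 Q x y'"
  using poly_cancel_linear_factor[of z "map_poly (\<lambda>c. poly c y) P" "map_poly (\<lambda>c. poly c y') Q"]
    assms
  by (simp add: poly2_eq_poly_map_poly)

lemma poly_const_if_periodic:
  fixes p :: "'a::{idom,ring_char_0} poly"
  assumes "d \<noteq> 0" and periodic: "\<And>x. (x - z) * poly p (x + d) = (x - z) * poly p x"
  shows "poly p x = poly p y"
proof -
  have "pcompose p [:d, 1:] = p"
    by (rule poly_cancel_linear_factor[of z]) (use periodic in \<open>simp add: poly_pcompose add.commute\<close>)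
  then have shift: "poly p (x + d) = poly p x" for x
    using poly_pcompose[of p "[:d, 1:]" x] by (simp add: add.commute)
  have "poly p (of_nat n * d) = poly p 0" for n
  proof (induct n)
    case (Suc n)
    then show ?case
      using shift[of "of_nat n * d"] by (simp add: distrib_right add.commute)
  qed simp
  then have "range (\<lambda>n. of_nat n * d) \<subseteq> {x. poly p x = poly [:poly p 0:] x}"
    by auto
  moreover have "infinite (range (\<lambda>n::nat. of_nat n * d))"
    using \<open>d \<noteq> 0\<close> by (auto intro!: range_inj_infinite injI)
  ultimately have "p = [:poly p 0:]"
    by (intro poly_eq_if_infinite_coincidence) (rule infinite_super)
  then show ?thesis
    by (metis poly_pCons poly_0 mult_zero_right add_0_right)
qed

lemma poly2_eqI:
  fixes P Q :: "'a::{idom,ring_char_0} poly poly"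
  assumes "\<And>x y. poly2 P x y = poly2 Q x y"
  shows "P = Q"
proof (rule poly_eq_if_infinite_coincidence)
  have "poly P [:x:] = poly Q [:x:]" for x
    by (rule poly_ext) (use assms in \<open>simp add: poly2_def\<close>)
  then have "range (\<lambda>x. [:x:]) \<subseteq> {r. poly P r = poly Q r}"
    by auto
  moreover have "inj (\<lambda>x::'a. [:x:])"
    by (rule injI) simp
  then have "infinite (range (\<lambda>x::'a. [:x:]))"
    using infinite_UNIV_char_0[where 'a='a] finite_imageD by blast
  ultimately show "infinite {r. poly P r = poly Q r}"
    by (rule infinite_super)
qed

definition poly_act :: "complex poly \<Rightarrow> R \<Rightarrow> R" where
  "poly_act p x = (p * fst x, p * snd x)"

lemma poly_act_pCons: "poly_act (pCons a p) x = rsc a x + D (poly_act p x)"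
  by (simp add: poly_act_def rsc_def D_def Dp_def algebra_simps)

lemma pair_eq_poly_act_basis: "(p, q) = poly_act p L0 + poly_act q W0"
  by (simp add: poly_act_def L0_def W0_def)

lemma lift_neg_pCons: "lift_neg (pCons a p) = [:[:a:]:] + [:0, -1:] * lift_neg p"
  by (simp add: lift_neg_def map_poly_pCons pcompose_pCons)

lemma lift_shift_pCons: "lift_shift (pCons a p) = [:[:a:]:] + [:Dp, 1:] * lift_shift p"
  by (simp add: lift_shift_def map_poly_pCons pcompose_pCons)

lemma poly2_lift_neg [simp]: "poly2 (lift_neg p) x y = poly p (- x)"
proof -
  have "poly [:0, -1:] [:x:] = [:- x:]"
    by simp
  then show ?thesis
    by (simp add: poly2_def lift_neg_def poly_pcompose pcompose_altdef[symmetric] pcompose_pCons_0)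
qed

lemma poly2_lift_shift [simp]: "poly2 (lift_shift p) x y = poly p (y + x)"
proof -
  have "poly [:Dp, 1:] [:x:] = [:x, 1:]"
    by (simp add: Dp_def)
  then show ?thesis
    by (simp add: poly2_def lift_shift_def poly_pcompose pcompose_altdef[symmetric] add.commute)
qed

lemma conformal_productD:
  assumes "conformal_product mul"
  shows conformal_product_add_left: "mul (x + y) z = mul x z + mul y z"
    and conformal_product_add_right: "mul x (y + z) = mul x y + mul x z"
    and conformal_product_scale_left: "mul (rsc c x) y = rlsc c (mul x y)"
    and conformal_product_scale_right: "mul x (rsc c y) = rlsc c (mul x y)"
    and conformal_product_D_left: "mul (D x) y = - lamRL (mul x y)"
    and conformal_product_D_right: "mul x (D y) = DRL (mul x y) + lamRL (mul x y)"
  using assms unfolding conformal_product_def by blast+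

lemma conformal_product_mul_0_left:
  assumes "conformal_product mul"
  shows "mul 0 x = 0"
  using conformal_product_add_left[OF assms, of 0 0 x] by simp

lemma conformal_product_mul_0_right:
  assumes "conformal_product mul"
  shows "mul x 0 = 0"
  using conformal_product_add_right[OF assms, of x 0 0] by simp

lemma conformal_product_poly_act_left:
  assumes cp: "conformal_product mul"
  shows "mul (poly_act p x) z = rlsm (lift_neg p) (mul x z)"
proof (induct p)
  case 0
  show ?case
    using conformal_product_mul_0_left[OF cp]
    by (simp add: poly_act_def rlsm_def lift_neg_def zero_prod_def)
next
  case (pCons a p)
  have "mul (poly_act (pCons a p) x) z = rlsc a (mul x z) - lamRL (mul (poly_act p x) z)"
    by (simp add: poly_act_pCons conformal_productD[OF cp])
  then show ?case
    unfolding pCons(2)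
    by (simp add: rlsc_def lamRL_def rlsm_def lift_neg_pCons algebra_simps)
qed

lemma conformal_product_poly_act_right:
  assumes cp: "conformal_product mul"
  shows "mul z (poly_act p x) = rlsm (lift_shift p) (mul z x)"
proof (induct p)
  case 0
  show ?case
    using conformal_product_mul_0_right[OF cp]
    by (simp add: poly_act_def rlsm_def lift_shift_def zero_prod_def)
next
  case (pCons a p)
  have "mul z (poly_act (pCons a p) x)
      = rlsc a (mul z x) + DRL (mul z (poly_act p x)) + lamRL (mul z (poly_act p x))"
    by (simp add: poly_act_pCons conformal_productD[OF cp])
  then show ?case
    unfolding pCons(2)
    by (simp add: rlsc_def lamRL_def DRL_def rlsm_def lift_shift_pCons algebra_simps)
qed

lemma conformal_product_pair_left:
  assumes cp: "conformal_product mul"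
  shows "mul (p, q) z = rlsm (lift_neg p) (mul L0 z) + rlsm (lift_neg q) (mul W0 z)"
  unfolding pair_eq_poly_act_basis
  by (simp add: conformal_product_add_left[OF cp] conformal_product_poly_act_left[OF cp])

lemma conformal_product_pair_right:
  assumes cp: "conformal_product mul"
  shows "mul z (p, q) = rlsm (lift_shift p) (mul z L0) + rlsm (lift_shift q) (mul z W0)"
  unfolding pair_eq_poly_act_basis
  by (simp add: conformal_product_add_right[OF cp] conformal_product_poly_act_right[OF cp])

lemma fst_snd_add: "\<pi> \<in> {fst, snd} \<Longrightarrow> \<pi> (P + Q) = \<pi> P + \<pi> Q"
  by auto

lemma fst_snd_rlsm: "\<pi> \<in> {fst, snd} \<Longrightarrow> \<pi> (rlsm s P) = s * \<pi> P"
  by (auto simp: rlsm_def)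

lemma poly2_pcompose_skew: "poly2 (pcompose Q [:- Dp, -1:]) x y = poly2 Q (- x - y) y"
proof -
  have skew_arg: "poly (poly [:- Dp, -1:] [:x:]) y = - x - y"
    by (simp add: Dp_def)
  have "poly2 (pcompose Q [:- Dp, -1:]) x y = poly (poly Q (poly [:- Dp, -1:] [:x:])) y"
    by (simp add: poly2_def poly_pcompose)
  also have "\<dots> = poly2 Q (- x - y) y"
    by (metis poly_poly_eq_poly2 skew_arg)
  finally show ?thesis .
qed

lemma poly2_skew: "\<pi> \<in> {fst, snd} \<Longrightarrow> poly2 (\<pi> (skew P)) x y = poly2 (\<pi> P) (- x - y) y"
  by (auto simp: skew_def poly2_pcompose_skew)

lemma poly2_mul_evalL_left:
  assumes "conformal_product mul" and "\<pi> \<in> {fst, snd}"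
  shows "poly2 (\<pi> (mul (evalL X x) z)) x' y
       = poly2 (fst X) x (- x') * poly2 (\<pi> (mul L0 z)) x' y
       + poly2 (snd X) x (- x') * poly2 (\<pi> (mul W0 z)) x' y"
  using assms(2)
  by (simp add: evalL_def conformal_product_pair_left[OF assms(1)] fst_snd_add fst_snd_rlsm
      poly_poly_eq_poly2)

lemma poly2_mul_evalL_right:
  assumes "conformal_product mul" and "\<pi> \<in> {fst, snd}"
  shows "poly2 (\<pi> (mul z (evalL X x))) x' y
       = poly2 (fst X) x (y + x') * poly2 (\<pi> (mul z L0)) x' y
       + poly2 (snd X) x (y + x') * poly2 (\<pi> (mul z W0)) x' y"
  using assms(2)
  by (simp add: evalL_def conformal_product_pair_right[OF assms(1)] fst_snd_add fst_snd_rlsm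
      poly_poly_eq_poly2)

lemma left_symmetric_at:
  assumes cp: "conformal_product mul" and "left_symmetric mul" and \<pi>: "\<pi> \<in> {fst, snd}"
  shows "poly2 (fst (mul x y)) l (- (l + m)) * poly2 (\<pi> (mul L0 z)) (l + m) t
       + poly2 (snd (mul x y)) l (- (l + m)) * poly2 (\<pi> (mul W0 z)) (l + m) t
       - (poly2 (fst (mul y z)) m (t + l) * poly2 (\<pi> (mul x L0)) l t
          + poly2 (snd (mul y z)) m (t + l) * poly2 (\<pi> (mul x W0)) l t)
     = poly2 (fst (mul y x)) m (- (l + m)) * poly2 (\<pi> (mul L0 z)) (l + m) t
       + poly2 (snd (mul y x)) m (- (l + m)) * poly2 (\<pi> (mul W0 z)) (l + m) t
       - (poly2 (fst (mul x z)) l (t + m) * poly2 (\<pi> (mul y L0)) m t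
          + poly2 (snd (mul x z)) l (t + m) * poly2 (\<pi> (mul y W0)) m t)"
proof -
  have "evalL (mul (evalL (mul x y) l) z) (l + m) - evalL (mul x (evalL (mul y z) m)) l
      = evalL (mul (evalL (mul y x) m) z) (l + m) - evalL (mul y (evalL (mul x z) l)) m"
    using assms(2) unfolding left_symmetric_def by blast
  then have "poly (\<pi> (mul (evalL (mul x y) l) z)) [:l + m:] - poly (\<pi> (mul x (evalL (mul y z) m))) [:l:]
      = poly (\<pi> (mul (evalL (mul y x) m) z)) [:l + m:] - poly (\<pi> (mul y (evalL (mul x z) l))) [:m:]"
    using \<pi> by (elim insertE) (simp_all add: evalL_def)
  then have "poly2 (\<pi> (mul (evalL (mul x y) l) z)) (l + m) t - poly2 (\<pi> (mul x (evalL (mul y z) m))) l t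
      = poly2 (\<pi> (mul (evalL (mul y x) m) z)) (l + m) t - poly2 (\<pi> (mul y (evalL (mul x z) l))) m t"
    unfolding poly2_def poly_diff[symmetric] by (rule arg_cong)
  then show ?thesis
    unfolding poly2_mul_evalL_left[OF cp \<pi>] poly2_mul_evalL_right[OF cp \<pi>] .
qed

lemma compatible_LSCA_W_at:
  assumes "compatible_LSCA_W a mul" and "\<pi> \<in> {fst, snd}"
  shows "poly2 (\<pi> (mul x y)) l t - poly2 (\<pi> (mul y x)) (- l - t) t = poly2 (\<pi> (bracketW a x y)) l t"
proof -
  have "mul x y - skew (mul y x) = bracketW a x y"
    using assms(1) unfolding compatible_LSCA_W_def by blast
  moreover have "\<pi> (mul x y - skew (mul y x)) = \<pi> (mul x y) - \<pi> (skew (mul y x))"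
    using assms(2) by auto
  ultimately show ?thesis
    using poly2_skew[OF assms(2)] by (metis poly2_diff)
qed

lemma fst_bracketW_L0_W0: "fst (bracketW a L0 W0) = 0"
  by (simp add: bracketW_def L0_def W0_def lift_neg_def lift_shift_def rlsm_def brLL_def brLW_def
      brWL_def)

lemma bracketW_W0_W0: "bracketW a W0 W0 = 0"
  by (simp add: bracketW_def L0_def W0_def lift_neg_def lift_shift_def rlsm_def brLL_def brLW_def
      brWL_def zero_prod_def)

locale W_compatible_LSCA =
  fixes a c :: complex and mul :: "R \<Rightarrow> R \<Rightarrow> RL"
  assumes compatible: "compatible_LSCA_W a mul"
    and mul_L0_L0: "mul L0 L0 = ([:[:c, 1:], 1:], 0)"
    and snd_mul_L0_W0: "snd (mul L0 W0) = [:[:c, 1:], [:a - 1:]:]"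
    and snd_mul_W0_L0: "snd (mul W0 L0) = [:[:c, 1:], 1:]"
begin

abbreviation "g1 \<equiv> poly2 (fst (mul L0 W0))"
abbreviation "h1 \<equiv> poly2 (fst (mul W0 L0))"
abbreviation "k1 \<equiv> poly2 (fst (mul W0 W0))"
abbreviation "k2 \<equiv> poly2 (snd (mul W0 W0))"

lemma conformal: "conformal_product mul"
  and left_symmetric: "left_symmetric mul"
  using compatible unfolding compatible_LSCA_W_def by blast+

lemma poly2_mul_L0_L0 [simp]:
  "poly2 (fst (mul L0 L0)) l t = t + l + c" "poly2 (snd (mul L0 L0)) l t = 0"
  by (simp_all add: mul_L0_L0 poly2_def)

lemma poly2_snd_mul_L0_W0 [simp]: "poly2 (snd (mul L0 W0)) l t = t + (a - 1) * l + c"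
  by (simp add: snd_mul_L0_W0 poly2_def)

lemma poly2_snd_mul_W0_L0 [simp]: "poly2 (snd (mul W0 L0)) l t = t + l + c"
  by (simp add: snd_mul_W0_L0 poly2_def)

lemma g1_eq_h1: "g1 l t = h1 (- l - t) t"
  using compatible_LSCA_W_at[OF compatible, where \<pi> = fst and x = L0 and y = W0]
  by (simp add: fst_bracketW_L0_W0)

lemma k1_symmetric: "k1 l t = k1 (- l - t) t"
  using compatible_LSCA_W_at[OF compatible, where \<pi> = fst and x = W0 and y = W0]
  by (simp add: bracketW_W0_W0)

lemma k2_symmetric: "k2 l t = k2 (- l - t) t"
  using compatible_LSCA_W_at[OF compatible, where \<pi> = snd and x = W0 and y = W0]
  by (simp add: bracketW_W0_W0)

lemma k2_g1_relation:
  "((a - 1) * l - m) * k2 (l + m) t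
     = (t + (a - 1) * l + c) * k2 m (t + l) - (t + m + c) * g1 l (t + m)
       - (t + (a - 1) * l + m + c) * k2 m t"
proof -
  have "g1 l (- (l + m)) = h1 m (- (l + m))"
    using g1_eq_h1[of l "- (l + m)"] by simp
  then show ?thesis
    using left_symmetric_at[OF conformal left_symmetric, where \<pi> = snd and x = L0 and y = W0
        and z = W0 and l = l and m = m and t = t]
    by (simp add: algebra_simps)
qed

lemma k2_shift:
  "((a - 1) * l + t + c) * (k2 (c - l) t - k2 (c - l) (t + l)) = - ((a - 1) * l * k2 c t)"
proof -
  have "k2 (l - t - c) t = k2 (c - l) t" "k2 (- t - c) (t + l) = k2 (c - l) (t + l)"
    "k2 (- t - c) t = k2 c t"
    by (metis k2_symmetric minus_diff_eq diff_minus_eq_add add_diff_cancel_left' diff_diff_eq2)+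
  then show ?thesis
    using k2_g1_relation[of l "- t - c" t] by (simp add: algebra_simps)
qed

lemma k2_c_eq_0:
  assumes "a \<noteq> 1"
  shows "k2 c t = 0"
proof -
  have "(s - (- c)) * k2 c s = (s - (- c)) * poly2 0 c s" for s
  proof -
    define l where "l = - (s + c) / (a - 1)"
    have l: "(a - 1) * l = - (s + c)"
      using assms by (simp add: l_def)
    then have "(a - 1) * l * k2 c s = 0"
      using k2_shift[of l s] by simp
    then have "(s + c) * k2 c s = 0"
      unfolding l by auto
    then show ?thesis
      by simp
  qed
  then show ?thesis
    using poly2_cancel_linear_factor_snd[of "- c" "snd (mul W0 W0)" c 0 c] by simp
qed

lemma k2_periodic:
  "(t - (- ((a - 1) * (c - x) + c))) * k2 x (t + (c - x))
     = (t - (- ((a - 1) * (c - x) + c))) * k2 x t"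
proof -
  have "(a - 1) * k2 c t = 0"
    using k2_c_eq_0 by (cases "a = 1") simp_all
  then have "(a - 1) * (c - x) * k2 c t = 0"
    by (metis mult.assoc mult.commute mult_zero_right)
  then have "((a - 1) * (c - x) + t + c) * (k2 x t - k2 x (t + (c - x))) = 0"
    using k2_shift[of "c - x" t] by simp
  then have "((a - 1) * (c - x) + t + c) * k2 x (t + (c - x))
      = ((a - 1) * (c - x) + t + c) * k2 x t"
    by (auto simp: right_diff_distrib)
  moreover have "t - (- ((a - 1) * (c - x) + c)) = (a - 1) * (c - x) + t + c"
    by simp
  ultimately show ?thesis
    by (simp only:)
qed

lemma k2_independent_snd: "k2 x t = k2 x 0"
proof -
  have off_c: "k2 x t = k2 x 0" if "x \<noteq> c" for x t
    using poly_const_if_periodic[of "c - x" "- ((a - 1) * (c - x) + c)"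
        "poly (snd (mul W0 W0)) [:x:]"] k2_periodic[of _ x] that
    by (simp add: poly2_def)
  have "(y - c) * k2 y t = (y - c) * k2 y 0" for y
    using off_c[of y t] by (cases "y = c") simp_all
  then show ?thesis
    by (rule poly2_cancel_linear_factor_fst)
qed

definition K :: complex where "K = k2 0 0"

lemma k2_constant: "k2 x t = K"
  using k2_independent_snd[of x t] k2_independent_snd[of x "- x"] k2_independent_snd[of 0 "- x"]
    k2_symmetric[of 0 "- x"]
  by (simp add: K_def)

lemma K_eq_0_if_a_neq_1: "a \<noteq> 1 \<Longrightarrow> K = 0"
  using k2_c_eq_0 k2_constant by metis

lemma g1_eq_0: "g1 l t = 0"
proof -
  have "(a - 1) * K = 0"
    using K_eq_0_if_a_neq_1 by (cases "a = 1") simp_all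
  moreover have "(t + c) * g1 l t = - (l * ((a - 1) * K))" for t
    using k2_g1_relation[of l 0 t] by (simp add: k2_constant algebra_simps)
  ultimately have "(t - (- c)) * g1 l t = (t - (- c)) * poly2 0 l t" for t
    by simp
  then show ?thesis
    using poly2_cancel_linear_factor_snd[of "- c" "fst (mul L0 W0)" l 0 l] by simp
qed

lemma h1_eq_0: "h1 l t = 0"
  using g1_eq_h1[of "- l - t" t] g1_eq_0 by simp

lemma k1_independent_fst: "k1 l t = k1 m t"
proof -
  have "k1 l (- (l + m)) = k1 m (- (l + m))"
    using k1_symmetric[of l "- (l + m)"] by simp
  then have "(s - (- (l + m + c))) * k1 l s = (s - (- (l + m + c))) * k1 m s" for s
    using left_symmetric_at[OF conformal left_symmetric, where \<pi> = fst and x = W0 and y = W0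
        and z = L0 and l = l and m = m and t = s]
    by (simp add: h1_eq_0 algebra_simps)
  then show ?thesis
    by (rule poly2_cancel_linear_factor_snd)
qed

lemma k1_eq_0: "k1 l t = 0"
proof -
  have "(s - (- c)) * k1 0 s = (s - (- c)) * poly2 0 0 s" for s
  proof -
    have "k1 (- c - s) u = k1 0 u" for u
      by (rule k1_independent_fst)
    then show ?thesis
      using left_symmetric_at[OF conformal left_symmetric, where \<pi> = snd and x = W0 and y = W0
          and z = W0 and l = 0 and m = "- c - s" and t = s]
      by (simp add: k2_constant algebra_simps)
  qed
  then have "k1 0 t = 0"
    using poly2_cancel_linear_factor_snd[of "- c" "fst (mul W0 W0)" 0 0 0] by simp
  then show ?thesis
    using k1_independent_fst by metis
qed

end

theorem lemma3p6:
  fixes a c :: complex and mul :: "R \<Rightarrow> R \<Rightarrow> RL"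
  assumes "compatible_LSCA_W a mul"
    and "mul L0 L0 = ([:[:c, 1:], 1:], 0)"
    and "snd (mul L0 W0) = [:[:c, 1:], [:a - 1:]:]"
    and "snd (mul W0 L0) = [:[:c, 1:], 1:]"
  shows "(fst (mul W0 L0) = 0 \<and> fst (mul L0 W0) = 0 \<and> mul W0 W0 = (0, 0))
       \<or> (a = 1 \<and> fst (mul W0 L0) = 0 \<and> fst (mul L0 W0) = 0 \<and> fst (mul W0 W0) = 0
          \<and> (\<exists>k::complex. k \<noteq> 0 \<and> snd (mul W0 W0) = [:[:k:]:]))"
proof -
  interpret W_compatible_LSCA a c mul
    using assms by unfold_locales
  have "fst (mul W0 L0) = 0"
    by (rule poly2_eqI) (simp add: h1_eq_0)
  moreover have "fst (mul L0 W0) = 0"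
    by (rule poly2_eqI) (simp add: g1_eq_0)
  moreover have "fst (mul W0 W0) = 0"
    by (rule poly2_eqI) (simp add: k1_eq_0)
  moreover have "snd (mul W0 W0) = [:[:K:]:]"
    by (rule poly2_eqI) (use k2_constant in \<open>simp add: poly2_def\<close>)
  ultimately show ?thesis
    using K_eq_0_if_a_neq_1 by (cases "K = 0") (auto simp: prod_eq_iff)
qed

end
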